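(* For every fixed $p\in(0,1]$ and every integer $n\ge1$, $\gamma_n^*(p)\ge\gamma_{n+1}^*(p)$.
   Context: SP-UA model: $n$ candidates with distinct overall ranks $1,\dots,n$ ($1$ best) arrive in uniformly random order; the decision maker sees only each candidate's rank among those arrived so far and irrevocably decides (possibly randomly) to make an offer or pass; an offered candidate accepts independently with probability $p$ and then the process stops. A policy collects a candidate of rank $i$ if it makes her an offer and she accepts. $\gamma_n^*(p)=\sup_{\mathcal P}\min_{k\in[n]}\Pr(\mathcal P\text{ collects a candidate with rank}\le k)/(1-(1-p)^k)$, the supremum over policies for $n$ candidates. *)

theory Defs
  imports Complex_Main
begin

text \<open>An arrival order of n candidates is a list xs of their overall ranks
  (rank 1 = best) in order of arrival: a permutation of 1..n.\<close>
definition arrival_orders :: "nat \<Rightarrow> nat list set" where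
  "arrival_orders n = {xs. distinct xs \<and> set xs = {1..n}}"

definition rel_rank :: "nat list \<Rightarrow> nat \<Rightarrow> nat" where
  "rel_rank ys i = card {j. j \<le> i \<and> ys ! j \<le> ys ! i}"

definition rel_ranks :: "nat list \<Rightarrow> nat list" where
  "rel_ranks ys = map (rel_rank ys) [0..<length ys]"

text \<open>A (randomised, behavioural) policy maps the observable history -- the relative
  ranks seen so far (including the current candidate) and the past offer decisions
  (all of which were rejected, otherwise the process would have stopped) -- to the
  probability of making an offer to the current candidate.\<close>
type_synonym policy = "nat list \<times> bool list \<Rightarrow> real"

definition is_policy :: "policy \<Rightarrow> bool" where
  "is_policy P \<longleftrightarrow> (\<forall>h. 0 \<le> P h \<and> P h \<le> 1)"

text \<open>collect_val P p k pre rest acts: probability (over the policy's coins and the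
  acceptance coins) that the policy collects a candidate of rank \<le> k, given that the
  candidates in pre have arrived without the process stopping, acts are the past
  offer decisions, and rest is the remaining arrival sequence.\<close>
fun collect_val :: "policy \<Rightarrow> real \<Rightarrow> nat \<Rightarrow> nat list \<Rightarrow> nat list \<Rightarrow> bool list \<Rightarrow> real" where
  "collect_val P p k pre [] acts = 0"
| "collect_val P p k pre (x # rest) acts =
     (let pre' = pre @ [x]; q = P (rel_ranks pre', acts);
          c = (if x \<le> k then 1 else 0) in
      q * (p * c + (1 - p) * collect_val P p k pre' rest (acts @ [True]))
      + (1 - q) * collect_val P p k pre' rest (acts @ [False]))"

definition collect_prob :: "nat \<Rightarrow> real \<Rightarrow> policy \<Rightarrow> nat \<Rightarrow> real" where
  "collect_prob n p P k =
     (\<Sum>xs\<in>arrival_orders n. collect_val P p k [] xs []) / fact n"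

definition gamma_star :: "nat \<Rightarrow> real \<Rightarrow> real" where
  "gamma_star n p =
     (SUP P\<in>{P. is_policy P}.
        Min ((\<lambda>k. collect_prob n p P k / (1 - (1 - p) ^ k)) ` {1..n}))"

end

theory Submission
  imports Defs
begin

text \<open>
  A policy for \<open>n + 1\<close> candidates is turned into a policy for \<open>n\<close> candidates that is at
  least as good for every threshold \<open>k \<le> n\<close>: the latter imagines an extra ghost candidate of
  the worst rank \<open>n + 1\<close> inserted at a uniformly random position among the real ones and
  runs the given policy on the combined sequence. Collecting the ghost never counts, and
  inserting the maximal rank into a uniformly random arrival order of \<open>n\<close> candidates yields a
  uniformly random arrival order of \<open>n + 1\<close> candidates. The ghost's position and fate are not
  observable, so the reduced policy offers with the conditional probability, given its own
  history, that the simulated policy offers to the current real candidate. An induction over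
  the arrivals shows that the ghost-averaged collection probability of the original policy
  factors as the mass of ghost scenarios consistent with the history times the collection
  probability of the reduced policy. Hence both policies collect a candidate of rank \<open>\<le> k\<close>
  with the same probability for \<open>k \<le> n\<close>, and the minimum over \<open>k \<in> {1..n+1}\<close> is at most
  the minimum over \<open>k \<in> {1..n}\<close>.
\<close>

definition insert_at :: "nat \<Rightarrow> 'a \<Rightarrow> 'a list \<Rightarrow> 'a list" where
  "insert_at j d ys = take j ys @ d # drop j ys"

lemma insert_at_0: "insert_at 0 d ys = d # ys"
  by (simp add: insert_at_def)

lemma insert_at_Suc_Cons: "insert_at (Suc j) d (x # ys) = x # insert_at j d ys"
  by (simp add: insert_at_def)

lemma insert_at_snoc: "j \<le> length ys \<Longrightarrow> insert_at j d (ys @ [x]) = insert_at j d ys @ [x]"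
  by (simp add: insert_at_def)

lemma insert_at_length: "insert_at (length ys) d ys = ys @ [d]"
  by (simp add: insert_at_def)

lemma length_insert_at [simp]: "j \<le> length ys \<Longrightarrow> length (insert_at j d ys) = Suc (length ys)"
  by (simp add: insert_at_def)

lemma filter_insert_at: "\<not> Q d \<Longrightarrow> filter Q (insert_at j d ys) = filter Q ys"
  unfolding insert_at_def by (metis append_take_drop_id filter.simps(2) filter_append)

lemma set_insert_at: "set (insert_at j d xs) = insert d (set xs)"
proof -
  have "set (insert_at j d xs) = insert d (set (take j xs @ drop j xs))"
    unfolding insert_at_def by (simp only: set_append set_simps) auto
  then show ?thesis by simp
qed

lemma distinct_insert_at: "distinct (insert_at j d xs) \<longleftrightarrow> distinct (d # xs)"
proof -
  have "distinct (insert_at j d xs) \<longleftrightarrow> distinct (d # (take j xs @ drop j xs))"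
    unfolding insert_at_def by (simp only: distinct_append distinct.simps set_append set_simps) blast
  then show ?thesis by (simp only: append_take_drop_id)
qed

lemma length_takeWhile_insert_at:
  assumes "d \<notin> set xs" and "j \<le> length xs"
  shows "length (takeWhile (\<lambda>y. y \<noteq> d) (insert_at j d xs)) = j"
proof -
  have "\<forall>y\<in>set (take j xs). y \<noteq> d" using assms(1) in_set_takeD by fastforce
  then have "takeWhile (\<lambda>y. y \<noteq> d) (insert_at j d xs) = take j xs"
    unfolding insert_at_def by simp
  then show ?thesis using assms(2) by simp
qed

lemma insert_at_inj:
  assumes "d \<notin> set xs" "j \<le> length xs" "d \<notin> set xs'" "j' \<le> length xs'"
    and eq: "insert_at j d xs = insert_at j' d xs'"
  shows "xs = xs' \<and> j = j'"
proof -
  have "j = length (takeWhile (\<lambda>y. y \<noteq> d) (insert_at j d xs))"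
    using length_takeWhile_insert_at[OF assms(1,2)] by simp
  also have "\<dots> = j'" using eq length_takeWhile_insert_at[OF assms(3,4)] by simp
  finally have j: "j = j'" .
  have "take j (insert_at j d xs) = take j xs" "drop (Suc j) (insert_at j d xs) = drop j xs"
       "take j' (insert_at j' d xs') = take j' xs'" "drop (Suc j') (insert_at j' d xs') = drop j' xs'"
    using assms(2,4) by (simp_all add: insert_at_def)
  then have "take j xs = take j xs'" "drop j xs = drop j xs'" using eq j by metis+
  then show ?thesis using j by (metis append_take_drop_id)
qed

lemma length_arrival_order: "xs \<in> arrival_orders n \<Longrightarrow> length xs = n"
  unfolding arrival_orders_def using distinct_card by fastforce

lemma arrival_orders_Suc:
  "arrival_orders (Suc n) = (\<lambda>(xs, j). insert_at j (Suc n) xs) ` (arrival_orders n \<times> {..n})"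
proof
  show "(\<lambda>(xs, j). insert_at j (Suc n) xs) ` (arrival_orders n \<times> {..n}) \<subseteq> arrival_orders (Suc n)"
    by (auto simp: arrival_orders_def distinct_insert_at set_insert_at)
next
  show "arrival_orders (Suc n) \<subseteq> (\<lambda>(xs, j). insert_at j (Suc n) xs) ` (arrival_orders n \<times> {..n})"
  proof
    fix ys assume ys: "ys \<in> arrival_orders (Suc n)"
    then have dy: "distinct ys" "set ys = {1..Suc n}" and ly: "length ys = Suc n"
      using length_arrival_order unfolding arrival_orders_def by auto
    then have "Suc n \<in> set ys" by simp
    then obtain j where j: "j < length ys" "ys ! j = Suc n" by (auto simp: in_set_conv_nth)
    define xs where "xs = take j ys @ drop (Suc j) ys"
    have ys_eq: "ys = insert_at j (Suc n) xs"
      using j id_take_nth_drop[OF j(1)] unfolding xs_def insert_at_def by simp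
    have dx: "distinct xs" "Suc n \<notin> set xs"
      using dy(1) unfolding ys_eq distinct_insert_at by auto
    have "insert (Suc n) (set xs) = {1..Suc n}" using dy(2) unfolding ys_eq set_insert_at .
    then have "set xs = {1..Suc n} - {Suc n}" using dx(2) by blast
    also have "\<dots> = {1..n}" by auto
    finally have "xs \<in> arrival_orders n" using dx(1) unfolding arrival_orders_def by simp
    moreover have "j \<le> n" using j ly by simp
    ultimately show "ys \<in> (\<lambda>(xs, j). insert_at j (Suc n) xs) ` (arrival_orders n \<times> {..n})"
      using ys_eq by force
  qed
qed

lemma inj_on_insert_at_max:
  "inj_on (\<lambda>(xs, j). insert_at j (Suc n) xs) (arrival_orders n \<times> {..n})"
proof (rule inj_onI, clarify)
  fix xs j xs' j'
  assume "xs \<in> arrival_orders n" "j \<le> n" "xs' \<in> arrival_orders n" "j' \<le> n"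
    and "insert_at j (Suc n) xs = insert_at j' (Suc n) xs'"
  moreover from this have "length xs = n" "length xs' = n" by (simp_all add: length_arrival_order)
  ultimately show "xs = xs' \<and> j = j'"
    by (intro insert_at_inj) (auto simp: arrival_orders_def)
qed

lemma sum_arrival_orders_Suc:
  "(\<Sum>ys\<in>arrival_orders (Suc n). f ys) = (\<Sum>xs\<in>arrival_orders n. \<Sum>j\<le>n. f (insert_at j (Suc n) xs))"
  unfolding arrival_orders_Suc sum.reindex[OF inj_on_insert_at_max] sum.cartesian_product
  by (simp add: case_prod_unfold)

lemma length_rel_ranks [simp]: "length (rel_ranks ys) = length ys"
  by (simp add: rel_ranks_def)

lemma rel_rank_append: "i < length ys \<Longrightarrow> rel_rank (ys @ zs) i = rel_rank ys i"
  unfolding rel_rank_def by (rule arg_cong[where f=card]) (auto simp: nth_append)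

lemma rel_ranks_snoc: "rel_ranks (ys @ [x]) = rel_ranks ys @ [rel_rank (ys @ [x]) (length ys)]"
  unfolding rel_ranks_def by (simp add: rel_rank_append)

lemma rel_rank_snoc_last:
  "rel_rank (ys @ [x]) (length ys) = Suc (length (filter (\<lambda>y. y \<le> x) ys))"
proof -
  have "{j. j \<le> length ys \<and> (ys @ [x]) ! j \<le> (ys @ [x]) ! length ys}
      = insert (length ys) {j. j < length ys \<and> ys ! j \<le> x}"
    by (auto simp: nth_append)
  then show ?thesis
    unfolding rel_rank_def length_filter_conv_card by simp
qed

lemma rel_ranks_insert_at_max:
  "j \<le> length ys \<Longrightarrow> \<forall>y\<in>set ys. y < d \<Longrightarrow>
   rel_ranks (insert_at j d ys) = insert_at j (Suc j) (rel_ranks ys)"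
proof (induction ys arbitrary: j rule: rev_induct)
  case Nil
  have "{i. i = 0 \<and> [d] ! i \<le> d} = {0}" by auto
  with Nil show ?case by (simp add: insert_at_def rel_ranks_def rel_rank_def)
next
  case (snoc x ys)
  show ?case
  proof (cases "j = Suc (length ys)")
    case True
    have "filter (\<lambda>y. y \<le> d) (ys @ [x]) = ys @ [x]"
      using snoc.prems by (auto intro!: filter_True)
    then have "rel_rank ((ys @ [x]) @ [d]) (length (ys @ [x])) = Suc (length (ys @ [x]))"
      by (simp only: rel_rank_snoc_last)
    then show ?thesis
      using True rel_ranks_snoc[of "ys @ [x]" d] insert_at_length[of "ys @ [x]" d]
        insert_at_length[of "rel_ranks (ys @ [x])"]
      by simp
  next
    case False
    then have j: "j \<le> length ys" using snoc.prems by simp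
    have "rel_rank (insert_at j d ys @ [x]) (length (insert_at j d ys)) = rel_rank (ys @ [x]) (length ys)"
      using snoc.prems by (simp add: rel_rank_snoc_last filter_insert_at)
    then show ?thesis
      using snoc.IH[OF j] snoc.prems j by (simp add: rel_ranks_snoc insert_at_snoc)
  qed
qed

lemma collect_val_Cons:
  "collect_val P p k pre (x # rest) a =
     P (rel_ranks (pre @ [x]), a) * (p * (if x \<le> k then 1 else 0)
        + (1 - p) * collect_val P p k (pre @ [x]) rest (a @ [True]))
   + (1 - P (rel_ranks (pre @ [x]), a)) * collect_val P p k (pre @ [x]) rest (a @ [False])"
  by (simp add: Let_def)

lemma collect_val_bounds:
  assumes P: "is_policy P" and p: "0 \<le> p" "p \<le> 1"
  shows "0 \<le> collect_val P p k pre rest a \<and> collect_val P p k pre rest a \<le> 1"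
proof (induction rest arbitrary: pre a)
  case Nil then show ?case by simp
next
  case (Cons x rest)
  let ?q = "P (rel_ranks (pre @ [x]), a)"
  let ?c = "(if x \<le> k then 1 else 0) :: real"
  let ?A = "collect_val P p k (pre @ [x]) rest (a @ [True])"
  let ?B = "collect_val P p k (pre @ [x]) rest (a @ [False])"
  have q: "0 \<le> ?q" "?q \<le> 1" using P unfolding is_policy_def by auto
  have A: "0 \<le> ?A" "?A \<le> 1" and B: "0 \<le> ?B" "?B \<le> 1" using Cons.IH by auto
  have i1: "0 \<le> p * ?c + (1 - p) * ?A" using A p by simp
  have i2: "p * ?c + (1 - p) * ?A \<le> 1" by (rule convex_bound_le) (use A p in auto)
  have "0 \<le> ?q * (p * ?c + (1 - p) * ?A) + (1 - ?q) * ?B" using q i1 B by simp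
  moreover have "?q * (p * ?c + (1 - p) * ?A) + (1 - ?q) * ?B \<le> 1"
    by (rule convex_bound_le) (use q i2 B in auto)
  ultimately show ?case by (simp only: collect_val_Cons)
qed


definition decision_prob :: "policy \<Rightarrow> nat list \<Rightarrow> bool list \<Rightarrow> real" where
  "decision_prob P r a = (\<Prod>i<length a.
     if a ! i then P (take (Suc i) r, take i a) else 1 - P (take (Suc i) r, take i a))"

lemma decision_prob_Nil [simp]: "decision_prob P r [] = 1"
  by (simp add: decision_prob_def)

lemma decision_prob_snoc:
  "decision_prob P r (a @ [c]) = decision_prob P r a *
     (if c then P (take (Suc (length a)) r, a) else 1 - P (take (Suc (length a)) r, a))"
proof -
  have "(\<Prod>i<length a. if (a @ [c]) ! i then P (take (Suc i) r, take i (a @ [c]))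
                       else 1 - P (take (Suc i) r, take i (a @ [c])))
      = (\<Prod>i<length a. if a ! i then P (take (Suc i) r, take i a) else 1 - P (take (Suc i) r, take i a))"
    by (rule prod.cong) (auto simp: nth_append)
  then show ?thesis unfolding decision_prob_def by simp
qed

lemma decision_prob_cong:
  "(\<And>i. i < length a \<Longrightarrow> P (take (Suc i) r, take i a) = P' (take (Suc i) r, take i a))
   \<Longrightarrow> decision_prob P r a = decision_prob P' r a"
  unfolding decision_prob_def by (rule prod.cong) auto

lemma decision_prob_append_ranks:
  "length a \<le> length r \<Longrightarrow> decision_prob P (r @ s) a = decision_prob P r a"
  unfolding decision_prob_def by (rule prod.cong) auto

lemma decision_prob_nonneg: "is_policy P \<Longrightarrow> 0 \<le> decision_prob P r a"
  unfolding decision_prob_def is_policy_def by (rule prod_nonneg) auto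

text \<open>How the simulated policy continues once the ghost has arrived as the \<open>j\<close>-th candidate
  (counting from 0): a history of the real candidates is translated into one of \<open>P\<close> by
  inserting the ghost's relative rank \<open>j + 1\<close> and the decision taken on it. The outcome
  \<open>None\<close> means that the ghost was offered and accepted, so that the simulated process has
  stopped; \<open>Some b\<close> means that the offer decision on the ghost was \<open>b\<close> and no acceptance
  happened.\<close>
definition ghost_policy :: "policy \<Rightarrow> nat \<Rightarrow> bool option \<Rightarrow> policy" where
  "ghost_policy P j \<beta> h = (if length (snd h) < j then P h else
      (case \<beta> of None \<Rightarrow> 0 | Some b \<Rightarrow> P (insert_at j (Suc j) (fst h), insert_at j b (snd h))))"

lemma is_policy_ghost_policy: "is_policy P \<Longrightarrow> is_policy (ghost_policy P j \<beta>)"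
  unfolding is_policy_def ghost_policy_def by (auto split: option.splits)

lemma decision_prob_ghost_policy_before:
  "length a \<le> j \<Longrightarrow> decision_prob (ghost_policy P j \<beta>) r a = decision_prob P r a"
  by (rule decision_prob_cong) (simp add: ghost_policy_def)

definition ghost_offer_prob :: "policy \<Rightarrow> nat \<Rightarrow> nat list \<Rightarrow> bool list \<Rightarrow> real" where
  "ghost_offer_prob P j r a = P (take j r @ [Suc j], take j a)"

definition ghost_outcome_prob ::
    "real \<Rightarrow> policy \<Rightarrow> nat \<Rightarrow> bool option \<Rightarrow> nat list \<Rightarrow> bool list \<Rightarrow> real" where
  "ghost_outcome_prob p P j \<beta> r a = (case \<beta> of
       None \<Rightarrow> p * ghost_offer_prob P j r a
     | Some True \<Rightarrow> (1 - p) * ghost_offer_prob P j r a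
     | Some False \<Rightarrow> 1 - ghost_offer_prob P j r a)"

definition ghost_weight ::
    "real \<Rightarrow> policy \<Rightarrow> nat \<Rightarrow> bool option \<Rightarrow> nat list \<Rightarrow> bool list \<Rightarrow> real" where
  "ghost_weight p P j \<beta> r a = ghost_outcome_prob p P j \<beta> r a * decision_prob (ghost_policy P j \<beta>) r a"

definition ghost_mass :: "real \<Rightarrow> policy \<Rightarrow> nat \<Rightarrow> nat list \<Rightarrow> bool list \<Rightarrow> real" where
  "ghost_mass p P j r a =
     ghost_weight p P j None r a + ghost_weight p P j (Some True) r a + ghost_weight p P j (Some False) r a"

definition ghost_offer_mass :: "real \<Rightarrow> policy \<Rightarrow> nat \<Rightarrow> nat list \<Rightarrow> bool list \<Rightarrow> real" where
  "ghost_offer_mass p P j r a =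
       ghost_weight p P j None r a * ghost_policy P j None (r, a)
     + ghost_weight p P j (Some True) r a * ghost_policy P j (Some True) (r, a)
     + ghost_weight p P j (Some False) r a * ghost_policy P j (Some False) (r, a)"

text \<open>Weight of the ghost scenarios consistent with the relative ranks \<open>r\<close> and decisions \<open>a\<close>
  on the real candidates that have arrived (\<open>length r = length a\<close>): each of the
  \<open>n + 1 - length a\<close> ghost positions not yet reached contributes the probability of the
  decisions \<open>a\<close> under \<open>P\<close> itself.\<close>
definition history_mass :: "nat \<Rightarrow> real \<Rightarrow> policy \<Rightarrow> nat list \<Rightarrow> bool list \<Rightarrow> real" where
  "history_mass n p P r a =
     real (Suc n - length a) * decision_prob P r a + (\<Sum>j<length a. ghost_mass p P j r a)"

text \<open>The part of that weight in which the simulated policy offers to the current real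
  candidate, whose relative rank is the last entry of \<open>r\<close> (\<open>length r = length a + 1\<close>).\<close>
definition history_offer_mass :: "nat \<Rightarrow> real \<Rightarrow> policy \<Rightarrow> nat list \<Rightarrow> bool list \<Rightarrow> real" where
  "history_offer_mass n p P r a =
     real (n - length a) * decision_prob P r a * P (r, a)
     + (\<Sum>j<Suc (length a). ghost_offer_mass p P j r a)"

text \<open>The clipping to \<open>[0, 1]\<close> only makes \<open>is_policy\<close> immediate: on well-formed histories the
  ratio already lies there (\<open>history_offer_mass_bounds\<close>).\<close>
definition reduced_policy :: "nat \<Rightarrow> real \<Rightarrow> policy \<Rightarrow> policy" where
  "reduced_policy n p P h =
     (let T = history_mass n p P (butlast (fst h)) (snd h) in
      if length (fst h) = Suc (length (snd h)) \<and> T \<noteq> 0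
      then max 0 (min 1 (history_offer_mass n p P (fst h) (snd h) / T)) else 0)"

lemma is_policy_reduced_policy: "is_policy (reduced_policy n p P)"
  unfolding is_policy_def reduced_policy_def Let_def by auto

lemma ghost_weight_nonneg:
  assumes "is_policy P" "0 \<le> p" "p \<le> 1"
  shows "0 \<le> ghost_weight p P j \<beta> r a"
proof -
  have "0 \<le> ghost_outcome_prob p P j \<beta> r a"
    using assms unfolding ghost_outcome_prob_def ghost_offer_prob_def is_policy_def
    by (auto split: option.splits bool.splits)
  then show ?thesis unfolding ghost_weight_def
    using decision_prob_nonneg[OF is_policy_ghost_policy[OF assms(1)]] by simp
qed

lemma ghost_weight_append_ranks:
  assumes "j \<le> length r" "length a \<le> length r"
  shows "ghost_weight p P j \<beta> (r @ s) a = ghost_weight p P j \<beta> r a"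
proof -
  have "take j (r @ s) = take j r" using assms(1) by simp
  then have "ghost_outcome_prob p P j \<beta> (r @ s) a = ghost_outcome_prob p P j \<beta> r a"
    unfolding ghost_outcome_prob_def ghost_offer_prob_def by (simp only:)
  then show ?thesis using assms(2) unfolding ghost_weight_def by (simp add: decision_prob_append_ranks)
qed

lemma ghost_weight_snoc:
  assumes "j \<le> length a" "length r = Suc (length a)"
  shows "ghost_weight p P j \<beta> r (a @ [c]) = ghost_weight p P j \<beta> r a *
    (if c then ghost_policy P j \<beta> (r, a) else 1 - ghost_policy P j \<beta> (r, a))"
proof -
  have "take j (a @ [c]) = take j a" using assms(1) by simp
  then have "ghost_outcome_prob p P j \<beta> r (a @ [c]) = ghost_outcome_prob p P j \<beta> r a"
    unfolding ghost_outcome_prob_def ghost_offer_prob_def by (simp only:)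
  then show ?thesis using assms(2) unfolding ghost_weight_def by (simp add: decision_prob_snoc)
qed

lemma ghost_mass_current:
  "length a = length r \<Longrightarrow> ghost_mass p P (length a) r a = decision_prob P r a"
  unfolding ghost_mass_def ghost_weight_def ghost_outcome_prob_def
  by (simp add: decision_prob_ghost_policy_before algebra_simps)

lemma ghost_mass_snoc_True:
  "j \<le> length a \<Longrightarrow> length r = Suc (length a) \<Longrightarrow>
   ghost_mass p P j r (a @ [True]) = ghost_offer_mass p P j r a"
  unfolding ghost_mass_def ghost_offer_mass_def by (simp add: ghost_weight_snoc)

lemma ghost_mass_snoc_False:
  "j \<le> length a \<Longrightarrow> length r = Suc (length a) \<Longrightarrow>
   ghost_mass p P j r (a @ [False]) = ghost_mass p P j r a - ghost_offer_mass p P j r a"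
  unfolding ghost_mass_def ghost_offer_mass_def by (simp add: ghost_weight_snoc algebra_simps)

text \<open>The arrival of the next real candidate turns one not-yet-reached ghost position into a
  reached one, without changing the total weight.\<close>
lemma history_mass_eq_next:
  assumes l: "length a = length r" and an: "length a \<le> n"
  shows "history_mass n p P r a =
    real (n - length a) * decision_prob P (r @ [z]) a + (\<Sum>j<Suc (length a). ghost_mass p P j (r @ [z]) a)"
proof -
  have "(\<Sum>j<Suc (length a). ghost_mass p P j (r @ [z]) a) = (\<Sum>j<Suc (length a). ghost_mass p P j r a)"
    by (rule sum.cong) (use l in \<open>auto simp: ghost_mass_def ghost_weight_append_ranks\<close>)
  also have "\<dots> = (\<Sum>j<length a. ghost_mass p P j r a) + decision_prob P r a"
    using ghost_mass_current[OF l] by simp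
  finally show ?thesis using an l unfolding history_mass_def
    by (simp add: decision_prob_append_ranks Suc_diff_le algebra_simps)
qed

lemma history_mass_snoc_True:
  assumes "length r = Suc (length a)"
  shows "history_mass n p P r (a @ [True]) = history_offer_mass n p P r a"
proof -
  have "(\<Sum>j<Suc (length a). ghost_mass p P j r (a @ [True])) = (\<Sum>j<Suc (length a). ghost_offer_mass p P j r a)"
    by (rule sum.cong) (use assms in \<open>auto simp: ghost_mass_snoc_True\<close>)
  then show ?thesis using assms unfolding history_mass_def history_offer_mass_def
    by (simp add: decision_prob_snoc)
qed

lemma history_mass_snoc_False:
  assumes l: "length a = length r" and an: "length a \<le> n"
  shows "history_mass n p P (r @ [z]) (a @ [False]) = history_mass n p P r a - history_offer_mass n p P (r @ [z]) a"
proof -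
  have "(\<Sum>j<Suc (length a). ghost_mass p P j (r @ [z]) (a @ [False])) =
        (\<Sum>j<Suc (length a). ghost_mass p P j (r @ [z]) a - ghost_offer_mass p P j (r @ [z]) a)"
    by (rule sum.cong) (use l in \<open>auto simp: ghost_mass_snoc_False\<close>)
  then show ?thesis using l an history_mass_eq_next[OF l an, of p P z]
    unfolding history_mass_def history_offer_mass_def
    by (simp add: decision_prob_snoc algebra_simps sum.distrib sum_subtractf)
qed

lemma history_offer_mass_bounds:
  assumes l: "length a = length r" and an: "length a \<le> n" and P: "is_policy P"
    and p: "0 \<le> p" "p \<le> 1"
  shows "0 \<le> history_offer_mass n p P (r @ [z]) a \<and> history_offer_mass n p P (r @ [z]) a \<le> history_mass n p P r a"
proof -
  let ?r = "r @ [z]"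
  have G: "0 \<le> ghost_policy P j \<beta> h" "ghost_policy P j \<beta> h \<le> 1" for j \<beta> h
    using is_policy_ghost_policy[OF P, of j \<beta>] unfolding is_policy_def by (cases h; auto)+
  have Pb: "0 \<le> P h" "P h \<le> 1" for h using P unfolding is_policy_def by (cases h; auto)+
  have w: "0 \<le> ghost_weight p P j \<beta> ?r a" for j \<beta> using ghost_weight_nonneg[OF P p] .
  have Y1: "0 \<le> ghost_offer_mass p P j ?r a" for j
    unfolding ghost_offer_mass_def using w G by simp
  have Y2: "ghost_offer_mass p P j ?r a \<le> ghost_mass p P j ?r a" for j
    unfolding ghost_offer_mass_def ghost_mass_def using w G
    by (intro add_mono mult_right_le_one_le) auto
  have R: "0 \<le> decision_prob P ?r a" by (rule decision_prob_nonneg[OF P])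
  have "0 \<le> real (n - length a) * decision_prob P ?r a * P (?r, a)"
    and "real (n - length a) * decision_prob P ?r a * P (?r, a) \<le> real (n - length a) * decision_prob P ?r a"
    using R Pb by (simp_all add: mult_left_le)
  moreover have "0 \<le> (\<Sum>j<Suc (length a). ghost_offer_mass p P j ?r a)"
    by (rule sum_nonneg) (use Y1 in auto)
  moreover have "(\<Sum>j<Suc (length a). ghost_offer_mass p P j ?r a) \<le> (\<Sum>j<Suc (length a). ghost_mass p P j ?r a)"
    by (rule sum_mono) (use Y2 in auto)
  ultimately show ?thesis
    using history_mass_eq_next[OF l an, of p P z] unfolding history_offer_mass_def by simp
qed


text \<open>Continuations of the simulation with the ghost inserted at position \<open>j\<close>, given the real
  prefix \<open>pre\<close> with decisions \<open>a\<close>: in the later term the ghost has not arrived yet; in the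
  earlier term it has, and the outcome \<open>None\<close> is absent because the process then stopped
  without collecting a real candidate.\<close>
definition ghost_later_term ::
    "nat \<Rightarrow> real \<Rightarrow> policy \<Rightarrow> nat \<Rightarrow> nat list \<Rightarrow> nat list \<Rightarrow> bool list \<Rightarrow> nat \<Rightarrow> real" where
  "ghost_later_term n p P k pre rest a j =
     decision_prob P (rel_ranks pre) a * collect_val P p k pre (insert_at (j - length pre) (Suc n) rest) a"

definition ghost_earlier_term ::
    "nat \<Rightarrow> real \<Rightarrow> policy \<Rightarrow> nat \<Rightarrow> nat list \<Rightarrow> nat list \<Rightarrow> bool list \<Rightarrow> nat \<Rightarrow> real" where
  "ghost_earlier_term n p P k pre rest a j =
       ghost_weight p P j (Some True) (rel_ranks pre) a
         * collect_val P p k (insert_at j (Suc n) pre) rest (insert_at j True a)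
     + ghost_weight p P j (Some False) (rel_ranks pre) a
         * collect_val P p k (insert_at j (Suc n) pre) rest (insert_at j False a)"

definition ghost_collect_sum ::
    "nat \<Rightarrow> real \<Rightarrow> policy \<Rightarrow> nat \<Rightarrow> nat list \<Rightarrow> nat list \<Rightarrow> bool list \<Rightarrow> real" where
  "ghost_collect_sum n p P k pre rest a =
     (\<Sum>j\<in>{length pre..n}. ghost_later_term n p P k pre rest a j)
     + (\<Sum>j<length pre. ghost_earlier_term n p P k pre rest a j)"

context
  fixes n :: nat and p :: real and P :: policy and k :: nat and pre :: "nat list" and x :: nat
    and rest :: "nat list" and a :: "bool list"
  assumes kn: "k \<le> n" and la: "length a = length pre" and pre_n: "length pre < n"
    and pre_le: "\<forall>y\<in>set pre. y \<le> n" and xn: "x \<le> n"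
begin

lemma decision_prob_rel_ranks_snoc: "decision_prob P (rel_ranks (pre @ [x])) a = decision_prob P (rel_ranks pre) a"
  using la by (simp add: rel_ranks_snoc decision_prob_append_ranks)

lemma rel_ranks_insert_ghost:
  "j \<le> length pre \<Longrightarrow> rel_ranks (insert_at j (Suc n) pre @ [x]) = insert_at j (Suc j) (rel_ranks (pre @ [x]))"
  using rel_ranks_insert_at_max[of j "pre @ [x]" "Suc n"] pre_le xn insert_at_snoc[of j pre "Suc n" x]
  by (simp add: le_imp_less_Suc)

lemma rel_ranks_snoc_ghost: "rel_ranks (pre @ [Suc n]) = rel_ranks pre @ [Suc (length pre)]"
  using rel_ranks_insert_at_max[of "length pre" pre "Suc n"] pre_le
    insert_at_length[of pre] insert_at_length[of "rel_ranks pre" "Suc (length pre)"]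
  by (simp add: le_imp_less_Suc)

lemma ghost_later_term_Cons:
  assumes j: "j \<in> {Suc (length pre)..n}"
  shows "ghost_later_term n p P k pre (x # rest) a j =
     p * (if x \<le> k then 1 else 0) * (decision_prob P (rel_ranks (pre @ [x])) a * P (rel_ranks (pre @ [x]), a))
     + (1 - p) * ghost_later_term n p P k (pre @ [x]) rest (a @ [True]) j
     + ghost_later_term n p P k (pre @ [x]) rest (a @ [False]) j"
proof -
  have e: "j - length pre = Suc (j - Suc (length pre))" using j by auto
  have t: "take (Suc (length a)) (rel_ranks (pre @ [x])) = rel_ranks (pre @ [x])" using la by simp
  show ?thesis
    unfolding ghost_later_term_def length_append_singleton e insert_at_Suc_Cons collect_val_Cons
      decision_prob_snoc t decision_prob_rel_ranks_snoc
    by (simp add: algebra_simps)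
qed

text \<open>The ghost arrives right before \<open>x\<close>.\<close>
lemma ghost_later_term_Cons_current:
  "ghost_later_term n p P k pre (x # rest) a (length pre) =
     p * (if x \<le> k then 1 else 0) * ghost_offer_mass p P (length pre) (rel_ranks (pre @ [x])) a
     + (1 - p) * ghost_earlier_term n p P k (pre @ [x]) rest (a @ [True]) (length pre)
     + ghost_earlier_term n p P k (pre @ [x]) rest (a @ [False]) (length pre)"
proof -
  let ?m = "length pre" and ?r = "rel_ranks (pre @ [x])"
  have i1: "insert_at ?m (Suc n) (pre @ [x]) = pre @ [Suc n] @ [x]" by (simp add: insert_at_def)
  have i2: "insert_at ?m b (a @ [c]) = a @ [b] @ [c]" for b c using la by (simp add: insert_at_def)
  have wt: "ghost_weight p P ?m \<beta> ?r (a @ [c]) = ghost_outcome_prob p P ?m \<beta> ?r a * decision_prob P (rel_ranks pre) a *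
       (if c then ghost_policy P ?m \<beta> (?r, a) else 1 - ghost_policy P ?m \<beta> (?r, a))" for \<beta> c
    using ghost_weight_snoc[of ?m a ?r p P \<beta> c] la unfolding ghost_weight_def
    by (simp add: decision_prob_ghost_policy_before decision_prob_rel_ranks_snoc)
  have wt0: "ghost_weight p P ?m \<beta> ?r a = ghost_outcome_prob p P ?m \<beta> ?r a * decision_prob P (rel_ranks pre) a" for \<beta>
    using la unfolding ghost_weight_def by (simp add: decision_prob_ghost_policy_before decision_prob_rel_ranks_snoc)
  have G0: "ghost_policy P ?m None (?r, a) = 0" using la by (simp add: ghost_policy_def)
  have GS: "ghost_policy P ?m (Some b) (?r, a) = P (rel_ranks ((pre @ [Suc n]) @ [x]), a @ [b])" for b
    using rel_ranks_insert_ghost[of ?m] i1 la by (simp add: ghost_policy_def insert_at_def)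
  have q: "ghost_offer_prob P ?m ?r a = P (rel_ranks (pre @ [Suc n]), a)"
    using rel_ranks_snoc_ghost la by (simp add: ghost_offer_prob_def rel_ranks_snoc)
  have dk: "\<not> Suc n \<le> k" using kn by simp
  show ?thesis
    unfolding ghost_later_term_def ghost_earlier_term_def diff_self_eq_0 insert_at_0
      collect_val_Cons[of P p k pre "Suc n"] length_append_singleton[symmetric] i1 i2 wt
      ghost_offer_mass_def wt0 G0
    unfolding ghost_outcome_prob_def
    apply (simp only: option.case bool.case GS q)
    apply (simp only: collect_val_Cons[of P p k "pre @ [Suc n]"] append_assoc[symmetric] dk if_False)
    apply (simp add: algebra_simps)
    done
qed

lemma ghost_earlier_term_Cons:
  assumes j: "j < length pre"
  shows "ghost_earlier_term n p P k pre (x # rest) a j =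
     p * (if x \<le> k then 1 else 0) * ghost_offer_mass p P j (rel_ranks (pre @ [x])) a
     + (1 - p) * ghost_earlier_term n p P k (pre @ [x]) rest (a @ [True]) j
     + ghost_earlier_term n p P k (pre @ [x]) rest (a @ [False]) j"
proof -
  let ?r = "rel_ranks (pre @ [x])"
  have jl: "j \<le> length a" "j \<le> length pre" using j la by auto
  have i1: "insert_at j (Suc n) (pre @ [x]) = insert_at j (Suc n) pre @ [x]" using jl by (simp add: insert_at_snoc)
  have i2: "insert_at j b (a @ [c]) = insert_at j b a @ [c]" for b c using jl by (simp add: insert_at_snoc)
  have wr: "ghost_weight p P j \<beta> ?r a = ghost_weight p P j \<beta> (rel_ranks pre) a" for \<beta>
    using j la ghost_weight_append_ranks[of j "rel_ranks pre" a p P \<beta> "[_]"] by (simp add: rel_ranks_snoc)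
  have wt: "ghost_weight p P j \<beta> ?r (a @ [c]) = ghost_weight p P j \<beta> (rel_ranks pre) a *
       (if c then ghost_policy P j \<beta> (?r, a) else 1 - ghost_policy P j \<beta> (?r, a))" for \<beta> c
    using ghost_weight_snoc[of j a ?r p P \<beta> c] la jl by (simp add: wr)
  have G0: "ghost_policy P j None (?r, a) = 0" using jl by (simp add: ghost_policy_def)
  have GS: "ghost_policy P j (Some b) (?r, a) = P (rel_ranks (insert_at j (Suc n) pre @ [x]), insert_at j b a)" for b
    using rel_ranks_insert_ghost[of j] jl by (simp add: ghost_policy_def)
  show ?thesis
    unfolding ghost_earlier_term_def i1 i2 wt ghost_offer_mass_def wr G0 GS collect_val_Cons
    by (simp add: algebra_simps)
qed

lemma ghost_collect_sum_Cons:
  "ghost_collect_sum n p P k pre (x # rest) a =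
     p * (if x \<le> k then 1 else 0) * history_offer_mass n p P (rel_ranks (pre @ [x])) a
     + (1 - p) * ghost_collect_sum n p P k (pre @ [x]) rest (a @ [True])
     + ghost_collect_sum n p P k (pre @ [x]) rest (a @ [False])"
proof -
  let ?c = "(if x \<le> k then 1 else 0) :: real" and ?m = "length pre" and ?r = "rel_ranks (pre @ [x])"
  let ?L = "ghost_later_term n p P k" and ?E = "ghost_earlier_term n p P k"
  have later: "(\<Sum>j\<in>{Suc ?m..n}. ?L pre (x # rest) a j)
      = p * ?c * (real (n - ?m) * (decision_prob P ?r a * P (?r, a)))
        + (1 - p) * (\<Sum>j\<in>{Suc ?m..n}. ?L (pre @ [x]) rest (a @ [True]) j)
        + (\<Sum>j\<in>{Suc ?m..n}. ?L (pre @ [x]) rest (a @ [False]) j)"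
    by (simp add: ghost_later_term_Cons sum.distrib sum_distrib_left)
  have earlier: "(\<Sum>j<?m. ?E pre (x # rest) a j)
      = p * ?c * (\<Sum>j<?m. ghost_offer_mass p P j ?r a)
        + (1 - p) * (\<Sum>j<?m. ?E (pre @ [x]) rest (a @ [True]) j)
        + (\<Sum>j<?m. ?E (pre @ [x]) rest (a @ [False]) j)"
    by (simp add: ghost_earlier_term_Cons sum.distrib sum_distrib_left)
  have "{?m..n} = insert ?m {Suc ?m..n}" using pre_n by auto
  then have "ghost_collect_sum n p P k pre (x # rest) a
      = ?L pre (x # rest) a ?m + (\<Sum>j\<in>{Suc ?m..n}. ?L pre (x # rest) a j) + (\<Sum>j<?m. ?E pre (x # rest) a j)"
    unfolding ghost_collect_sum_def by simp
  moreover have "ghost_collect_sum n p P k (pre @ [x]) rest (a @ [c])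
      = (\<Sum>j\<in>{Suc ?m..n}. ?L (pre @ [x]) rest (a @ [c]) j)
        + ((\<Sum>j<?m. ?E (pre @ [x]) rest (a @ [c]) j) + ?E (pre @ [x]) rest (a @ [c]) ?m)" for c
    unfolding ghost_collect_sum_def by simp
  moreover have "history_offer_mass n p P ?r a
      = real (n - ?m) * decision_prob P ?r a * P (?r, a)
        + ((\<Sum>j<?m. ghost_offer_mass p P j ?r a) + ghost_offer_mass p P ?m ?r a)"
    unfolding history_offer_mass_def using la by simp
  ultimately show ?thesis
    unfolding later earlier ghost_later_term_Cons_current by (simp only: ring_distribs)
qed

end

lemma ghost_collect_sum_eq:
  assumes P: "is_policy P" and p: "0 < p" "p \<le> 1" and kn: "k \<le> n"
  shows "length a = length pre \<Longrightarrow> length pre + length rest = n \<Longrightarrow> \<forall>y\<in>set pre. y \<le> n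
    \<Longrightarrow> \<forall>y\<in>set rest. y \<le> n \<Longrightarrow>
    ghost_collect_sum n p P k pre rest a
      = history_mass n p P (rel_ranks pre) a * collect_val (reduced_policy n p P) p k pre rest a"
proof (induction rest arbitrary: pre a)
  case Nil
  then have "{length pre..n} = {n}" by auto
  then show ?case using Nil kn
    by (simp add: ghost_collect_sum_def ghost_later_term_def ghost_earlier_term_def insert_at_def Let_def)
next
  case (Cons x rest)
  let ?Q = "reduced_policy n p P" and ?r = "rel_ranks (pre @ [x])"
  define T where "T = history_mass n p P (rel_ranks pre) a"
  define Y where "Y = history_offer_mass n p P ?r a"
  have an: "length a = length (rel_ranks pre)" "length a \<le> n" using Cons.prems by auto
  have bounds: "0 \<le> Y" "Y \<le> T" unfolding Y_def T_def rel_ranks_snoc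
    using history_offer_mass_bounds[OF an P] p by auto
  have offer: "Y = ?Q (?r, a) * T"
  proof (cases "T = 0")
    case True then show ?thesis using bounds by simp
  next
    case False
    then have "?Q (?r, a) = Y / T"
      using bounds Cons.prems(1) by (simp add: reduced_policy_def rel_ranks_snoc T_def Y_def)
    then show ?thesis using False by simp
  qed
  have mass_True: "history_mass n p P ?r (a @ [True]) = Y"
    unfolding Y_def by (rule history_mass_snoc_True) (use Cons.prems(1) in simp)
  have mass_False: "history_mass n p P ?r (a @ [False]) = T - Y"
    unfolding Y_def T_def rel_ranks_snoc by (rule history_mass_snoc_False) (use an in auto)
  have "ghost_collect_sum n p P k pre (x # rest) a = p * (if x \<le> k then 1 else 0) * Y
     + (1 - p) * ghost_collect_sum n p P k (pre @ [x]) rest (a @ [True])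
     + ghost_collect_sum n p P k (pre @ [x]) rest (a @ [False])"
    unfolding Y_def by (rule ghost_collect_sum_Cons) (use kn Cons.prems in auto)
  also have "\<dots> = p * (if x \<le> k then 1 else 0) * Y
     + (1 - p) * (Y * collect_val ?Q p k (pre @ [x]) rest (a @ [True]))
     + (T - Y) * collect_val ?Q p k (pre @ [x]) rest (a @ [False])"
    using Cons.IH[of "a @ [True]" "pre @ [x]"] Cons.IH[of "a @ [False]" "pre @ [x]"] Cons.prems
      mass_True mass_False by simp
  also have "\<dots> = T * collect_val ?Q p k pre (x # rest) a"
    unfolding collect_val_Cons[of ?Q] offer by (simp add: algebra_simps)
  finally show ?case unfolding T_def .
qed

lemma sum_insert_ghost:
  assumes P: "is_policy P" and p: "0 < p" "p \<le> 1" and kn: "k \<le> n" and xs: "xs \<in> arrival_orders n"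
  shows "(\<Sum>j\<le>n. collect_val P p k [] (insert_at j (Suc n) xs) [])
    = real (Suc n) * collect_val (reduced_policy n p P) p k [] xs []"
proof -
  have "(\<Sum>j\<le>n. collect_val P p k [] (insert_at j (Suc n) xs) []) = ghost_collect_sum n p P k [] xs []"
    by (simp add: ghost_collect_sum_def ghost_later_term_def atLeast0AtMost)
  also have "\<dots> = history_mass n p P [] [] * collect_val (reduced_policy n p P) p k [] xs []"
    using ghost_collect_sum_eq[OF P p kn] length_arrival_order[OF xs] xs
    unfolding arrival_orders_def by (simp add: rel_ranks_def)
  also have "history_mass n p P [] [] = real (Suc n)"
    by (simp add: history_mass_def)
  finally show ?thesis .
qed

lemma collect_prob_reduced_policy:
  assumes P: "is_policy P" and p: "0 < p" "p \<le> 1" and kn: "k \<le> n"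
  shows "collect_prob (Suc n) p P k = collect_prob n p (reduced_policy n p P) k"
proof -
  have "(\<Sum>ys\<in>arrival_orders (Suc n). collect_val P p k [] ys [])
      = (\<Sum>xs\<in>arrival_orders n. real (Suc n) * collect_val (reduced_policy n p P) p k [] xs [])"
    unfolding sum_arrival_orders_Suc by (rule sum.cong) (use sum_insert_ghost[OF P p kn] in auto)
  also have "\<dots> = real (Suc n) * (\<Sum>xs\<in>arrival_orders n. collect_val (reduced_policy n p P) p k [] xs [])"
    by (rule sum_distrib_left[symmetric])
  finally show ?thesis
    unfolding collect_prob_def by (simp add: of_nat_mult)
qed

lemma collect_prob_le_card:
  assumes "is_policy P" "0 \<le> p" "p \<le> 1"
  shows "collect_prob n p P k \<le> real (card (arrival_orders n)) / fact n"
proof -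
  have "(\<Sum>xs\<in>arrival_orders n. collect_val P p k [] xs []) \<le> real (card (arrival_orders n)) * 1"
    by (rule sum_bounded_above) (use collect_val_bounds[OF assms] in auto)
  then show ?thesis unfolding collect_prob_def by (simp add: divide_right_mono)
qed

abbreviation min_ratio :: "nat \<Rightarrow> real \<Rightarrow> policy \<Rightarrow> real" where
  "min_ratio n p P \<equiv> Min ((\<lambda>k. collect_prob n p P k / (1 - (1 - p) ^ k)) ` {1..n})"

lemma bdd_above_min_ratio:
  assumes "0 < p" "p \<le> 1" "1 \<le> n"
  shows "bdd_above (min_ratio n p ` {P. is_policy P})"
proof (rule bdd_aboveI2)
  fix P assume P: "P \<in> {P. is_policy P}"
  have "min_ratio n p P \<le> collect_prob n p P 1 / (1 - (1 - p) ^ 1)"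
    by (rule Min_le) (use assms in \<open>auto intro!: image_eqI[where x=1]\<close>)
  also have "\<dots> = collect_prob n p P 1 / p" by simp
  also have "\<dots> \<le> real (card (arrival_orders n)) / fact n / p"
    by (rule divide_right_mono) (use collect_prob_le_card[of P p n 1] P assms in auto)
  finally show "min_ratio n p P \<le> real (card (arrival_orders n)) / fact n / p" .
qed

lemma min_ratio_Suc_le_reduced_policy:
  assumes "is_policy P" "0 < p" "p \<le> 1" "1 \<le> n"
  shows "min_ratio (Suc n) p P \<le> min_ratio n p (reduced_policy n p P)"
proof -
  have "min_ratio (Suc n) p P \<le> Min ((\<lambda>k. collect_prob (Suc n) p P k / (1 - (1 - p) ^ k)) ` {1..n})"
    using assms by (intro Min_antimono) auto
  also have "\<dots> = min_ratio n p (reduced_policy n p P)"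
    using collect_prob_reduced_policy[OF assms(1-3)] by (intro arg_cong[where f=Min] image_cong) auto
  finally show ?thesis .
qed

theorem lemma1:
  fixes p :: real and n :: nat
  assumes "0 < p" and "p \<le> 1" and "n \<ge> 1"
  shows "gamma_star n p \<ge> gamma_star (n + 1) p"
proof -
  have "is_policy (\<lambda>_. 0)" by (simp add: is_policy_def)
  then have nonempty: "{P. is_policy P} \<noteq> {}" by blast
  have "gamma_star (Suc n) p \<le> gamma_star n p"
    unfolding gamma_star_def
  proof (rule cSUP_mono[OF nonempty bdd_above_min_ratio[OF assms]])
    fix P assume "P \<in> {P. is_policy P}"
    then show "\<exists>Q\<in>{P. is_policy P}. min_ratio (Suc n) p P \<le> min_ratio n p Q"
      using min_ratio_Suc_le_reduced_policy[OF _ assms] is_policy_reduced_policy by blast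
  qed
  then show ?thesis by simp
qed

end
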